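(* Let $u:D_O(1)\to\mathbb R$ be harmonic on the Euclidean unit disc $D_O(1)=\{y\in\mathbb R^2:|y|<1\}$ with $\int_{D_O(1)}|\nabla^{\mathbb R^2}u|^2\,dy_1\,dy_2<\infty$. Then $$\int_{D_O(1)}(1-|y|)^2|\nabla^{\mathbb R^2}\nabla^{\mathbb R^2}u|^2\,dy_1\,dy_2\le\int_{D_O(1)}|\nabla^{\mathbb R^2}u|^2\,dy_1\,dy_2,$$ where $|\nabla^{\mathbb R^2}\nabla^{\mathbb R^2}u|^2=\sum_{j,k=1}^2|\partial_{y_j}\partial_{y_k}u|^2$.
   Context: $\nabla^{\mathbb R^2}u=(\partial_{y_1}u,\partial_{y_2}u)$ is the Euclidean gradient. *)

theory Defs
  imports "HOL-Analysis.Analysis"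
begin

definition partial :: "(real^2 \<Rightarrow> real) \<Rightarrow> 2 \<Rightarrow> real^2 \<Rightarrow> real" where
  "partial u j y = frechet_derivative u (at y) (axis j 1)"

definition harmonic_on :: "(real^2 \<Rightarrow> real) \<Rightarrow> (real^2) set \<Rightarrow> bool" where
  "harmonic_on u S \<longleftrightarrow>
     (\<forall>y\<in>S. u differentiable (at y)) \<and>
     (\<forall>k. \<forall>y\<in>S. partial u k differentiable (at y)) \<and>
     (\<forall>j k. continuous_on S (partial (partial u k) j)) \<and>
     (\<forall>y\<in>S. (\<Sum>j\<in>UNIV. partial (partial u j) j y) = 0)"

definition grad_sq :: "(real^2 \<Rightarrow> real) \<Rightarrow> real^2 \<Rightarrow> real" where
  "grad_sq u y = (\<Sum>k\<in>UNIV. (partial u k y)^2)"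

definition hess_sq :: "(real^2 \<Rightarrow> real) \<Rightarrow> real^2 \<Rightarrow> real" where
  "hess_sq u y = (\<Sum>j\<in>UNIV. \<Sum>k\<in>UNIV. (partial (partial u k) j y)^2)"

end

theory Submission
  imports Defs "HOL-Complex_Analysis.Complex_Analysis"
begin

text \<open>For harmonic \<open>u\<close> the function \<open>f = \<partial>\<^sub>1u - i \<partial>\<^sub>2u\<close> is holomorphic, with
  \<open>|\<nabla>u|\<^sup>2 = |f|\<^sup>2\<close> and \<open>|\<nabla>\<nabla>u|\<^sup>2 = 2|f'|\<^sup>2\<close>. Writing \<open>f = \<Sum> c\<^sub>n z\<^sup>n\<close>, Parseval's identity on
  each circle \<open>|z| = r\<close> and integration in polar coordinates give
  \<open>\<integral> |\<nabla>u|\<^sup>2 = \<Sum> \<pi> |c\<^sub>n|\<^sup>2 / (n + 1)\<close> and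
  \<open>\<integral> (1 - |y|)\<^sup>2 |\<nabla>\<nabla>u|\<^sup>2 = \<Sum> 2\<pi> (n + 1) |c\<^sub>n\<^sub>+\<^sub>1|\<^sup>2 / ((2n + 3)(n + 2))\<close>.
  The second series is dominated termwise by the first one without its constant term.\<close>

section \<open>Symmetry of mixed partial derivatives\<close>

lemma has_real_derivative_along_line:
  fixes g :: "'a::real_normed_vector \<Rightarrow> real"
  assumes "g differentiable (at (a + s *\<^sub>R v))"
  shows "((\<lambda>t. g (a + t *\<^sub>R v)) has_real_derivative frechet_derivative g (at (a + s *\<^sub>R v)) v) (at s)"
proof -
  let ?D = "frechet_derivative g (at (a + s *\<^sub>R v))"
  have D: "(g has_derivative ?D) (at (a + s *\<^sub>R v))"
    using assms frechet_derivative_works by blast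
  have "((\<lambda>t. a + t *\<^sub>R v) has_derivative (\<lambda>t. t *\<^sub>R v)) (at s)"
    by (auto intro!: derivative_eq_intros)
  from diff_chain_at[OF this D] have "((\<lambda>t. g (a + t *\<^sub>R v)) has_derivative (\<lambda>t. t * ?D v)) (at s)"
    using linear_cmul[OF has_derivative_linear[OF D]] by (simp add: comp_def)
  then show ?thesis
    by (rule has_derivative_imp_has_field_derivative) simp
qed

lemma second_difference_mean_value:
  fixes u :: "'a::real_normed_vector \<Rightarrow> real"
  defines "D \<equiv> \<lambda>f v x. frechet_derivative f (at x) v"
  assumes h: "0 < h"
    and square: "\<And>s t. s \<in> {0..h} \<Longrightarrow> t \<in> {0..h} \<Longrightarrow> y + s *\<^sub>R v + t *\<^sub>R w \<in> S"
    and du: "\<forall>x\<in>S. u differentiable (at x)"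
    and ddu: "\<forall>x\<in>S. D u v differentiable (at x)"
  obtains s t where "s \<in> {0<..<h}" "t \<in> {0<..<h}"
    "u (y + h *\<^sub>R v + h *\<^sub>R w) - u (y + h *\<^sub>R v) - u (y + h *\<^sub>R w) + u y
       = h\<^sup>2 * D (D u v) w (y + s *\<^sub>R v + t *\<^sub>R w)"
proof -
  define P where "P s t = y + s *\<^sub>R v + t *\<^sub>R w" for s t
  have du_line: "((\<lambda>s. u (P s t)) has_real_derivative D u v (P s t)) (at s)"
    if "s \<in> {0..h}" "t \<in> {0..h}" for s t
    using has_real_derivative_along_line[of u "y + t *\<^sub>R w" s v] du square[OF that]
    by (simp add: P_def D_def algebra_simps)
  have ddu_line: "((\<lambda>t. D u v (P s t)) has_real_derivative D (D u v) w (P s t)) (at t)"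
    if "s \<in> {0..h}" "t \<in> {0..h}" for s t
    using has_real_derivative_along_line[of "D u v" "y + s *\<^sub>R v" t w] ddu square[OF that]
    by (simp add: P_def D_def algebra_simps)
  have "\<exists>s>0. s < h \<and> (u (P h h) - u (P h 0)) - (u (P 0 h) - u (P 0 0))
      = (h - 0) * (D u v (P s h) - D u v (P s 0))"
    using h by (intro MVT2 DERIV_diff du_line) auto
  then obtain s where s: "0 < s" "s < h"
    "(u (P h h) - u (P h 0)) - (u (P 0 h) - u (P 0 0)) = h * (D u v (P s h) - D u v (P s 0))"
    by auto
  have "\<exists>t>0. t < h \<and> D u v (P s h) - D u v (P s 0) = (h - 0) * D (D u v) w (P s t)"
    using h s by (intro MVT2 ddu_line) auto
  then obtain t where t: "0 < t" "t < h" "D u v (P s h) - D u v (P s 0) = h * D (D u v) w (P s t)"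
    by auto
  show ?thesis
    by (rule that[of s t]) (use s t in \<open>auto simp: P_def power2_eq_square\<close>)
qed

text \<open>Both mixed derivatives equal \<open>h\<^sup>-\<^sup>2\<close> times the same second difference at points of a
  small parallelogram at \<open>y\<close>; continuity at \<open>y\<close> lets \<open>h \<rightarrow> 0\<close>.\<close>
lemma frechet_derivative_directional_commute:
  fixes u :: "'a::real_normed_vector \<Rightarrow> real"
  defines "D \<equiv> \<lambda>f v x. frechet_derivative f (at x) v"
  assumes S: "open S" "y \<in> S"
    and du: "\<forall>x\<in>S. u differentiable (at x)"
    and ddu: "\<forall>x\<in>S. D u v differentiable (at x)" "\<forall>x\<in>S. D u w differentiable (at x)"
    and cont: "isCont (D (D u v) w) y" "isCont (D (D u w) v) y"
  shows "D (D u v) w y = D (D u w) v y"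
proof -
  have "\<bar>D (D u v) w y - D (D u w) v y\<bar> < \<epsilon>" if "\<epsilon> > 0" for \<epsilon>
  proof -
    obtain r0 where r0: "r0 > 0" "ball y r0 \<subseteq> S"
      using S open_contains_ball by blast
    obtain r1 where r1: "r1 > 0" "\<And>x. dist x y < r1 \<Longrightarrow> \<bar>D (D u v) w x - D (D u v) w y\<bar> < \<epsilon>/2"
      using cont(1) \<open>\<epsilon> > 0\<close> unfolding continuous_at_eps_delta dist_real_def by (meson half_gt_zero)
    obtain r2 where r2: "r2 > 0" "\<And>x. dist x y < r2 \<Longrightarrow> \<bar>D (D u w) v x - D (D u w) v y\<bar> < \<epsilon>/2"
      using cont(2) \<open>\<epsilon> > 0\<close> unfolding continuous_at_eps_delta dist_real_def by (meson half_gt_zero)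
    define r where "r = min r0 (min r1 r2)"
    define h where "h = r / (norm v + norm w + 1)"
    have r: "r > 0"
      using r0 r1 r2 by (simp add: r_def)
    have pos: "norm v + norm w + 1 > 0"
      using norm_ge_zero[of v] norm_ge_zero[of w] by linarith
    have h: "h > 0"
      using r pos by (simp add: h_def)
    have near: "dist (y + s *\<^sub>R a + t *\<^sub>R b) y < r"
      if "s \<in> {0..h}" "t \<in> {0..h}" "{a, b} = {v, w}" for s t a b
    proof -
      have "dist (y + s *\<^sub>R a + t *\<^sub>R b) y \<le> s * norm a + t * norm b"
        using that norm_triangle_ineq[of "s *\<^sub>R a" "t *\<^sub>R b"] by (simp add: dist_norm add.assoc)
      also have "\<dots> \<le> h * (norm a + norm b)"
        using that by (simp add: distrib_left add_mono mult_right_mono)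
      also have "\<dots> = h * (norm v + norm w)"
        using that(3) by (auto simp: doubleton_eq_iff)
      also have "\<dots> < h * (norm v + norm w + 1)"
        using h by simp
      also have "\<dots> = r"
        using pos by (simp add: h_def)
      finally show ?thesis .
    qed
    have square: "y + s *\<^sub>R a + t *\<^sub>R b \<in> S"
      if "s \<in> {0..h}" "t \<in> {0..h}" "{a, b} = {v, w}" for s t a b
      using near[OF that] r0 by (auto simp: r_def dist_commute)
    obtain s t where st: "s \<in> {0<..<h}" "t \<in> {0<..<h}"
      "u (y + h *\<^sub>R v + h *\<^sub>R w) - u (y + h *\<^sub>R v) - u (y + h *\<^sub>R w) + u y
         = h\<^sup>2 * D (D u v) w (y + s *\<^sub>R v + t *\<^sub>R w)"
      using second_difference_mean_value[OF h square[of _ _ v w, OF _ _ refl] du ddu(1)[unfolded D_def]]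
      unfolding D_def by blast
    obtain s' t' where st': "s' \<in> {0<..<h}" "t' \<in> {0<..<h}"
      "u (y + h *\<^sub>R w + h *\<^sub>R v) - u (y + h *\<^sub>R w) - u (y + h *\<^sub>R v) + u y
         = h\<^sup>2 * D (D u w) v (y + s' *\<^sub>R w + t' *\<^sub>R v)"
      using second_difference_mean_value[OF h square[of _ _ w v, OF _ _ insert_commute] du ddu(2)[unfolded D_def]]
      unfolding D_def by blast
    have "D (D u v) w (y + s *\<^sub>R v + t *\<^sub>R w) = D (D u w) v (y + s' *\<^sub>R w + t' *\<^sub>R v)"
      using st(3) st'(3) h by (simp add: algebra_simps)
    moreover have "\<bar>D (D u v) w (y + s *\<^sub>R v + t *\<^sub>R w) - D (D u v) w y\<bar> < \<epsilon>/2"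
      using r1(2) near[of s t v w] st by (simp add: r_def)
    moreover have "\<bar>D (D u w) v (y + s' *\<^sub>R w + t' *\<^sub>R v) - D (D u w) v y\<bar> < \<epsilon>/2"
      using r2(2) near[of s' t' w v] st' by (simp add: r_def insert_commute)
    ultimately show ?thesis
      by linarith
  qed
  from this[of "\<bar>D (D u v) w y - D (D u w) v y\<bar>"] show ?thesis
    by linarith
qed

lemma partial_eq_frechet_axis: "partial u k = (\<lambda>x. frechet_derivative u (at x) (axis k 1))"
  by (simp add: partial_def fun_eq_iff)

lemma partial_partial_commute:
  fixes u :: "real^2 \<Rightarrow> real"
  assumes S: "open S" "y \<in> S"
    and du: "\<forall>x\<in>S. u differentiable (at x)"
    and ddu: "\<forall>k. \<forall>x\<in>S. partial u k differentiable (at x)"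
    and cont: "\<forall>j k. continuous_on S (partial (partial u k) j)"
  shows "partial (partial u i) j y = partial (partial u j) i y"
  using frechet_derivative_directional_commute[OF S du, of "axis i 1" "axis j 1"] ddu
    cont S continuous_on_eq_continuous_at
  unfolding partial_eq_frechet_axis by blast

section \<open>The holomorphic gradient of a harmonic function\<close>

definition complex_of_vec :: "real^2 \<Rightarrow> complex" where
  "complex_of_vec y = Complex (y$1) (y$2)"

definition vec_of_complex :: "complex \<Rightarrow> real^2" where
  "vec_of_complex z = (\<chi> i. if i = 1 then Re z else Im z)"

lemma vec_of_complex_nth [simp]: "vec_of_complex z $ 1 = Re z" "vec_of_complex z $ 2 = Im z"
  by (simp_all add: vec_of_complex_def)

lemma vec_of_complex_of_vec [simp]: "vec_of_complex (complex_of_vec y) = y"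
  by (simp add: vec_of_complex_def complex_of_vec_def vec_eq_iff forall_2)

lemma complex_of_vec_of_complex [simp]: "complex_of_vec (vec_of_complex z) = z"
  by (simp add: complex_of_vec_def complex_eq_iff)

lemma norm_vec_of_complex [simp]: "norm (vec_of_complex z) = cmod z"
  by (simp add: norm_vec_def L2_set_def sum_2 cmod_def)

lemma norm_complex_of_vec [simp]: "cmod (complex_of_vec y) = norm y"
  by (metis norm_vec_of_complex vec_of_complex_of_vec)

lemma vec_of_complex_eq_axis_comb: "vec_of_complex w = Re w *\<^sub>R axis 1 1 + Im w *\<^sub>R axis 2 1"
  by (simp add: vec_eq_iff forall_2 axis_def)

lemma bounded_linear_vec_of_complex: "bounded_linear vec_of_complex"
  by (rule linear_conv_bounded_linear[THEN iffD1], rule linearI) (simp_all add: vec_eq_iff forall_2)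

lemma complex_of_vec_eq: "complex_of_vec y = of_real (y$1) + \<i> * of_real (y$2)"
  by (simp add: complex_of_vec_def complex_eq_iff)

lemma continuous_on_complex_of_vec [continuous_intros]:
  "continuous_on S f \<Longrightarrow> continuous_on S (\<lambda>x. complex_of_vec (f x))"
  unfolding complex_of_vec_eq by (intro continuous_intros)

lemma continuous_on_vec_of_complex [continuous_intros]:
  "continuous_on S f \<Longrightarrow> continuous_on S (\<lambda>x. vec_of_complex (f x))"
  using bounded_linear_vec_of_complex by (rule bounded_linear.continuous_on)

lemma vec_of_complex_vimage_ball [simp]: "vec_of_complex -` ball 0 r = ball 0 r"
  by auto


text \<open>\<open>\<partial>\<^sub>1u - i \<partial>\<^sub>2u = 2\<partial>\<^sub>zu\<close>; for harmonic \<open>u\<close> its Cauchy-Riemann equations are the Laplace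
  equation and the symmetry of the mixed partials.\<close>
definition holo_grad :: "(real^2 \<Rightarrow> real) \<Rightarrow> complex \<Rightarrow> complex" where
  "holo_grad u z = Complex (partial u 1 (vec_of_complex z)) (- partial u 2 (vec_of_complex z))"

lemma harmonic_on_partial_22:
  "harmonic_on u S \<Longrightarrow> y \<in> S \<Longrightarrow> partial (partial u 2) 2 y = - partial (partial u 1) 1 y"
  unfolding harmonic_on_def by (auto simp: sum_2 eq_neg_iff_add_eq_0 add.commute)

lemma harmonic_on_partial_12:
  "harmonic_on u S \<Longrightarrow> open S \<Longrightarrow> y \<in> S \<Longrightarrow> partial (partial u 1) 2 y = partial (partial u 2) 1 y"
  unfolding harmonic_on_def by (blast intro: partial_partial_commute)

lemma has_field_derivative_holo_grad:
  assumes u: "harmonic_on u S" and S: "open S" "vec_of_complex z \<in> S"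
  defines "y \<equiv> vec_of_complex z"
  shows "(holo_grad u has_field_derivative
           Complex (partial (partial u 1) 1 y) (- partial (partial u 2) 1 y)) (at z)"
proof -
  define DP where "DP = frechet_derivative (partial u 1) (at y)"
  define DQ where "DQ = frechet_derivative (partial u 2) (at y)"
  have "partial u k differentiable (at y)" for k
    using u S unfolding harmonic_on_def y_def by blast
  then have dP: "(partial u 1 has_derivative DP) (at y)" and dQ: "(partial u 2 has_derivative DQ) (at y)"
    unfolding DP_def DQ_def by (metis frechet_derivative_works)+
  have DP_axis: "DP (axis 1 1) = partial (partial u 1) 1 y" "DP (axis 2 1) = partial (partial u 2) 1 y"
    and DQ_axis: "DQ (axis 1 1) = partial (partial u 2) 1 y" "DQ (axis 2 1) = - partial (partial u 1) 1 y"
    using harmonic_on_partial_12[OF u S] harmonic_on_partial_22[OF u S(2)]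
    by (simp_all add: DP_def DQ_def partial_def[of "partial u 1"] partial_def[of "partial u 2"] y_def)
  have "(holo_grad u has_derivative
          (\<lambda>w. of_real (DP (vec_of_complex w)) + \<i> * of_real (- DQ (vec_of_complex w)))) (at z)"
  proof -
    have "holo_grad u = (\<lambda>w. of_real (partial u 1 (vec_of_complex w)) + \<i> * of_real (- partial u 2 (vec_of_complex w)))"
      by (auto simp: fun_eq_iff holo_grad_def complex_eq_iff)
    moreover have "((\<lambda>x. of_real (partial u 1 x) + \<i> * of_real (- partial u 2 x)) has_derivative
        (\<lambda>h. of_real (DP h) + \<i> * of_real (- DQ h))) (at y)"
      by (intro derivative_eq_intros dP dQ) (auto simp: dP dQ)
    ultimately show ?thesis
      using diff_chain_at[OF bounded_linear_imp_has_derivative[OF bounded_linear_vec_of_complex]]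
      by (simp add: comp_def y_def)
  qed
  then show ?thesis
  proof (rule has_derivative_imp_has_field_derivative)
    fix w
    have "linear DP" "linear DQ"
      using dP dQ by (simp_all add: has_derivative_linear)
    then show "w * Complex (partial (partial u 1) 1 y) (- partial (partial u 2) 1 y)
        = of_real (DP (vec_of_complex w)) + \<i> * of_real (- DQ (vec_of_complex w))"
      by (simp add: vec_of_complex_eq_axis_comb linear_add linear_cmul DP_axis DQ_axis
          complex_eq_iff algebra_simps)
  qed
qed

lemma holomorphic_on_holo_grad:
  assumes "harmonic_on u S" "open S"
  shows "holo_grad u holomorphic_on (vec_of_complex -` S)"
proof -
  have "holo_grad u field_differentiable at z" if "vec_of_complex z \<in> S" for z
    using has_field_derivative_holo_grad[OF assms that] field_differentiable_def by blast
  then show ?thesis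
    by (simp add: holomorphic_on_def field_differentiable_at_within)
qed

lemma grad_sq_eq_norm_holo_grad: "grad_sq u y = (cmod (holo_grad u (complex_of_vec y)))\<^sup>2"
  by (simp add: grad_sq_def holo_grad_def sum_2 cmod_power2)

lemma hess_sq_eq_norm_deriv_holo_grad:
  assumes u: "harmonic_on u S" and S: "open S" "y \<in> S"
  shows "hess_sq u y = 2 * (cmod (deriv (holo_grad u) (complex_of_vec y)))\<^sup>2"
proof -
  have "deriv (holo_grad u) (complex_of_vec y)
      = Complex (partial (partial u 1) 1 y) (- partial (partial u 2) 1 y)"
    using has_field_derivative_holo_grad[OF u S(1), of "complex_of_vec y"] S(2)
    by (simp add: DERIV_imp_deriv)
  then show ?thesis
    using harmonic_on_partial_12[OF u S] harmonic_on_partial_22[OF u S(2)]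
    by (simp add: hess_sq_def sum_2 cmod_power2)
qed

section \<open>Parseval's identity on circles\<close>

lemma set_integral_cis_multiple:
  fixes k :: int
  shows "(\<integral>\<theta>\<in>{-pi..pi}. cis (of_int k * \<theta>) \<partial>lborel) = (if k = 0 then 2 * pi else 0)"
proof (cases "k = 0")
  case True
  then show ?thesis
    by (simp add: set_integral_const measure_lborel_Icc emeasure_lborel_Icc scaleR_conv_of_real)
next
  case False
  define F where "F \<theta> = cis (of_int k * \<theta>) / (\<i> * of_int k)" for \<theta> :: real
  have FTC: "((\<lambda>\<theta>. cis (of_int k * \<theta>)) has_integral (F pi - F (-pi))) {-pi..pi}"
  proof (rule fundamental_theorem_of_calculus)
    fix x :: real
    have "((\<lambda>\<theta>. exp (\<i> * of_int k * of_real \<theta>) / (\<i> * of_int k)) has_vector_derivative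
           exp (\<i> * of_int k * of_real x) * (\<i> * of_int k) / (\<i> * of_int k)) (at x within {-pi..pi})"
      using False by (intro has_vector_derivative_real_field derivative_eq_intros) auto
    moreover have "(\<lambda>\<theta>::real. exp (\<i> * of_int k * of_real \<theta>) / (\<i> * of_int k)) = F"
      by (auto simp: F_def cis_conv_exp fun_eq_iff mult_ac)
    moreover have "exp (\<i> * of_int k * of_real x) * (\<i> * of_int k) / (\<i> * of_int k) = cis (of_int k * x)"
      using False by (simp add: cis_conv_exp mult_ac)
    ultimately show "(F has_vector_derivative cis (of_int k * x)) (at x within {-pi..pi})"
      by simp
  qed simp
  have periodic: "F pi = F (-pi)"
  proof -
    have "cis (of_int k * pi) = cis (of_int k * - pi) * cis (2 * pi * of_int k)"
      by (simp add: cis_mult algebra_simps)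
    then show ?thesis by (simp add: F_def cis_multiple_2pi)
  qed
  have "set_integrable lborel {-pi..pi} (\<lambda>\<theta>. cis (of_int k * \<theta>))"
    unfolding set_integrable_def by (intro borel_integrable_compact continuous_intros) simp
  then have "(\<integral>\<theta>\<in>{-pi..pi}. cis (of_int k * \<theta>) \<partial>lborel) = integral {-pi..pi} (\<lambda>\<theta>. cis (of_int k * \<theta>))"
    by (rule set_borel_integral_eq_integral(2))
  also have "\<dots> = 0"
    using integral_unique[OF FTC] periodic by simp
  finally show ?thesis
    using False by simp
qed

lemma sums_set_integral_compact:
  fixes h :: "nat \<Rightarrow> 'a::euclidean_space \<Rightarrow> 'b::{banach,second_countable_topology}"
  assumes K: "compact K"
    and sums: "\<And>x. x \<in> K \<Longrightarrow> (\<lambda>n. h n x) sums H x"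
    and cont: "\<And>n. continuous_on K (h n)"
    and bnd: "\<And>n x. x \<in> K \<Longrightarrow> norm (h n x) \<le> b n"
    and b: "summable b"
  shows "(\<lambda>n. \<integral>x\<in>K. h n x \<partial>lborel) sums (\<integral>x\<in>K. H x \<partial>lborel)"
proof -
  define f where "f n x = indicator K x *\<^sub>R h n x" for n x
  have int: "integrable lborel (f n)" for n
    unfolding f_def using K cont by (rule borel_integrable_compact)
  have bnd': "norm (f n x) \<le> indicator K x * b n" for n x
    using bnd by (simp add: f_def indicator_def)
  have sn: "summable (\<lambda>n. norm (f n x))" for x
  proof (cases "x \<in> K")
    case True
    then show ?thesis using bnd by (intro summable_comparison_test'[OF b, of 0]) (simp add: f_def)
  qed (simp add: f_def)
  have si: "summable (\<lambda>n. \<integral>x. norm (f n x) \<partial>lborel)"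
  proof (rule summable_comparison_test'[of "\<lambda>n. measure lborel K * b n" 0])
    show "summable (\<lambda>n. measure lborel K * b n)" using b by (rule summable_mult)
    have "K \<in> sets lborel" "emeasure lborel K \<noteq> \<infinity>"
      using K emeasure_bounded_finite[OF compact_imp_bounded[OF K]] by (simp_all add: borel_compact)
    then have "(\<integral>x. indicator K x * b n \<partial>lborel) = measure lborel K * b n" for n
      using set_integral_const[of K lborel "b n"] by (simp add: set_lebesgue_integral_def)
    moreover have "(\<integral>x. norm (f n x) \<partial>lborel) \<le> (\<integral>x. indicator K x * b n \<partial>lborel)" for n
      using int bnd' borel_integrable_compact[OF K continuous_on_const, of "b n"]
      by (intro integral_mono) auto
    ultimately show "norm (\<integral>x. norm (f n x) \<partial>lborel) \<le> measure lborel K * b n" for n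
      by simp
  qed
  have "(\<integral>x. (\<Sum>n. f n x) \<partial>lborel) = (\<Sum>n. \<integral>x. f n x \<partial>lborel)"
    by (rule integral_suminf[OF int _ si]) (simp add: sn)
  moreover have "summable (\<lambda>n. \<integral>x. f n x \<partial>lborel)"
    by (rule summable_norm_cancel, rule summable_comparison_test'[OF si, of 0])
      (auto intro: integral_norm_bound)
  ultimately have "(\<lambda>n. \<integral>x. f n x \<partial>lborel) sums (\<integral>x. (\<Sum>n. f n x) \<partial>lborel)"
    by (simp add: summable_sums)
  moreover have "(\<lambda>x. \<Sum>n. f n x) = (\<lambda>x. indicator K x *\<^sub>R H x)"
  proof
    fix x
    show "(\<Sum>n. f n x) = indicator K x *\<^sub>R H x"
      using sums[of x] by (cases "x \<in> K") (simp_all add: f_def sums_iff)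
  qed
  ultimately show ?thesis
    unfolding set_lebesgue_integral_def f_def by simp
qed

lemma fourier_coefficient_abs_summable:
  fixes a :: "nat \<Rightarrow> complex"
  assumes a: "summable (\<lambda>n. norm (a n))"
    and G: "\<And>\<theta>. (\<lambda>n. a n * cis (real n * \<theta>)) sums G \<theta>"
  shows "(\<integral>\<theta>\<in>{-pi..pi}. cis (real n * \<theta>) * cnj (G \<theta>) \<partial>lborel) = 2 * pi * cnj (a n)"
proof -
  have "(\<lambda>m. cnj (a m) * cis (of_int (int n - int m) * \<theta>)) sums (cis (real n * \<theta>) * cnj (G \<theta>))" for \<theta>
  proof -
    have "(\<lambda>m. cnj (a m * cis (real m * \<theta>))) sums cnj (G \<theta>)"
      using G[of \<theta>] by (subst sums_cnj)
    from sums_mult[OF this, of "cis (real n * \<theta>)"] show ?thesis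
      by (simp add: cis_cnj cis_mult algebra_simps)
  qed
  then have "(\<lambda>m. \<integral>\<theta>\<in>{-pi..pi}. cnj (a m) * cis (of_int (int n - int m) * \<theta>) \<partial>lborel)
      sums (\<integral>\<theta>\<in>{-pi..pi}. cis (real n * \<theta>) * cnj (G \<theta>) \<partial>lborel)"
    by (rule sums_set_integral_compact[OF compact_Icc _ _ _ a]) (auto intro!: continuous_intros simp: norm_mult)
  moreover have "(\<lambda>m. \<integral>\<theta>\<in>{-pi..pi}. cnj (a m) * cis (of_int (int n - int m) * \<theta>) \<partial>lborel)
      = (\<lambda>m. if m = n then 2 * pi * cnj (a n) else 0)"
  proof
    fix m
    have "(\<integral>\<theta>\<in>{-pi..pi}. cnj (a m) * cis (of_int (int n - int m) * \<theta>) \<partial>lborel)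
        = cnj (a m) * (\<integral>\<theta>\<in>{-pi..pi}. cis (of_int (int n - int m) * \<theta>) \<partial>lborel)"
      by (rule set_integral_mult_right)
    also have "\<dots> = (if m = n then 2 * pi * cnj (a n) else 0)"
      by (subst set_integral_cis_multiple) auto
    finally show "(\<integral>\<theta>\<in>{-pi..pi}. cnj (a m) * cis (of_int (int n - int m) * \<theta>) \<partial>lborel)
        = (if m = n then 2 * pi * cnj (a n) else 0)" .
  qed
  ultimately show ?thesis
    using sums_single[of n "\<lambda>_. 2 * pi * cnj (a n)"] sums_unique2 by fastforce
qed

lemma parseval_abs_summable:
  fixes a :: "nat \<Rightarrow> complex"
  assumes a: "summable (\<lambda>n. norm (a n))"
    and G: "\<And>\<theta>. (\<lambda>n. a n * cis (real n * \<theta>)) sums G \<theta>"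
    and G_cont: "continuous_on {-pi..pi} G"
  shows "(\<lambda>n. 2 * pi * (cmod (a n))\<^sup>2) sums (\<integral>\<theta>\<in>{-pi..pi}. (cmod (G \<theta>))\<^sup>2 \<partial>lborel)"
proof -
  define B where "B = (\<Sum>n. norm (a n))"
  have G_bound: "norm (G \<theta>) \<le> B" for \<theta>
  proof -
    have "norm (G \<theta>) = norm (\<Sum>n. a n * cis (real n * \<theta>))"
      using G[of \<theta>] by (simp add: sums_iff)
    also have "\<dots> \<le> (\<Sum>n. norm (a n * cis (real n * \<theta>)))"
      by (rule summable_norm) (simp add: norm_mult a)
    finally show ?thesis by (simp add: norm_mult B_def)
  qed
  have "(\<lambda>n. \<integral>\<theta>\<in>{-pi..pi}. a n * (cis (real n * \<theta>) * cnj (G \<theta>)) \<partial>lborel)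
      sums (\<integral>\<theta>\<in>{-pi..pi}. G \<theta> * cnj (G \<theta>) \<partial>lborel)"
  proof (rule sums_set_integral_compact[OF compact_Icc _ _ _ summable_mult2[OF a, of B]])
    show "(\<lambda>n. a n * (cis (real n * \<theta>) * cnj (G \<theta>))) sums (G \<theta> * cnj (G \<theta>))" for \<theta>
      using sums_mult2[OF G[of \<theta>], of "cnj (G \<theta>)"] by (simp add: mult_ac)
    show "continuous_on {-pi..pi} (\<lambda>\<theta>. a n * (cis (real n * \<theta>) * cnj (G \<theta>)))" for n
      by (intro continuous_intros G_cont)
    show "norm (a n * (cis (real n * \<theta>) * cnj (G \<theta>))) \<le> norm (a n) * B" for n \<theta>
      using G_bound[of \<theta>] by (simp add: norm_mult mult_left_mono)
  qed
  moreover have "(\<integral>\<theta>\<in>{-pi..pi}. a n * (cis (real n * \<theta>) * cnj (G \<theta>)) \<partial>lborel)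
      = of_real (2 * pi * (cmod (a n))\<^sup>2)" for n
  proof -
    have "(\<integral>\<theta>\<in>{-pi..pi}. a n * (cis (real n * \<theta>) * cnj (G \<theta>)) \<partial>lborel)
        = 2 * pi * (a n * cnj (a n))"
      using fourier_coefficient_abs_summable[OF a G, of n] by simp
    then show ?thesis
      by (simp only: complex_norm_square[symmetric]) simp
  qed
  moreover have "(\<integral>\<theta>\<in>{-pi..pi}. G \<theta> * cnj (G \<theta>) \<partial>lborel)
      = of_real (\<integral>\<theta>\<in>{-pi..pi}. (cmod (G \<theta>))\<^sup>2 \<partial>lborel)"
    by (simp only: complex_norm_square[symmetric] set_integral_complex_of_real)
  ultimately have "(\<lambda>n. of_real (2 * pi * (cmod (a n))\<^sup>2)) sums
      (of_real (\<integral>\<theta>\<in>{-pi..pi}. (cmod (G \<theta>))\<^sup>2 \<partial>lborel) :: complex)"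
    by (simp only:)
  then show ?thesis
    by (simp only: sums_of_real_iff)
qed

definition taylor_coeff :: "(complex \<Rightarrow> complex) \<Rightarrow> nat \<Rightarrow> complex" where
  "taylor_coeff g n = (deriv ^^ n) g 0 / fact n"

lemma taylor_coeff_deriv:
  "taylor_coeff (deriv g) n = of_nat (Suc n) * taylor_coeff g (Suc n)"
proof -
  have "(deriv ^^ n) (deriv g) = (deriv ^^ Suc n) g"
    by (simp only: funpow_Suc_right o_def)
  moreover have "of_nat (Suc n) * (X / fact (Suc n)) = X / fact n" for X :: complex
    by (simp add: field_simps del: of_nat_Suc)
  ultimately show ?thesis
    by (simp add: taylor_coeff_def)
qed

lemma parseval_power_series_circle:
  fixes g :: "complex \<Rightarrow> complex"
  assumes g: "g holomorphic_on ball 0 R" and z: "cmod z < R"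
  shows "(\<lambda>n. 2 * pi * (cmod (taylor_coeff g n))\<^sup>2 * cmod z ^ (2 * n))
           sums (\<integral>\<theta>\<in>{-pi..pi}. (cmod (g (cis \<theta> * z)))\<^sup>2 \<partial>lborel)"
proof -
  define a where "a n = taylor_coeff g n * z ^ n" for n
  have series: "(\<lambda>n. a n * cis (real n * \<theta>)) sums g (cis \<theta> * z)" for \<theta>
  proof -
    have "(\<lambda>n. (deriv ^^ n) g 0 / fact n * (cis \<theta> * z - 0) ^ n) sums g (cis \<theta> * z)"
      using z by (intro holomorphic_power_series[OF g]) (simp add: norm_mult)
    moreover have "(deriv ^^ n) g 0 / fact n * (cis \<theta> * z - 0) ^ n = a n * cis (real n * \<theta>)" for n
      by (simp add: a_def taylor_coeff_def power_mult_distrib Complex.DeMoivre)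
    ultimately show ?thesis by simp
  qed
  have summable: "summable (\<lambda>n. norm (a n))"
  proof -
    define r where "r = (cmod z + R) / 2"
    have r: "cmod z < r" "r < R"
      using z by (simp_all add: r_def)
    moreover have "0 < r"
      using r(1) norm_ge_zero[of z] by linarith
    ultimately have "(\<lambda>n. (deriv ^^ n) g 0 / fact n * (of_real r - 0) ^ n) sums g (of_real r)"
      by (intro holomorphic_power_series[OF g]) auto
    then have "summable (\<lambda>n. taylor_coeff g n * of_real r ^ n)"
      by (simp add: taylor_coeff_def sums_iff)
    then show ?thesis
      using powser_insidea[of _ "of_real r" z] r by (simp add: a_def)
  qed
  have "continuous_on {-pi..pi} (\<lambda>\<theta>. g (cis \<theta> * z))"
    by (rule continuous_on_compose2[OF holomorphic_on_imp_continuous_on[OF g]])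
      (auto intro!: continuous_intros simp: norm_mult z)
  then have "(\<lambda>n. 2 * pi * (cmod (a n))\<^sup>2) sums (\<integral>\<theta>\<in>{-pi..pi}. (cmod (g (cis \<theta> * z)))\<^sup>2 \<partial>lborel)"
    by (rule parseval_abs_summable[OF summable series])
  then show ?thesis
    by (simp add: a_def norm_mult norm_power power_mult_distrib power_mult[symmetric] mult.assoc mult.commute[of 2 _])
qed

section \<open>Integrals over the unit disc\<close>

definition rotate2 :: "real \<Rightarrow> real^2 \<Rightarrow> real^2" where
  "rotate2 \<theta> y = vec_of_complex (cis \<theta> * complex_of_vec y)"

lemma complex_of_vec_rotate2 [simp]: "complex_of_vec (rotate2 \<theta> y) = cis \<theta> * complex_of_vec y"
  by (simp add: rotate2_def)

lemma norm_rotate2 [simp]: "norm (rotate2 \<theta> y) = norm y"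
  by (metis norm_complex_of_vec complex_of_vec_rotate2 norm_mult norm_cis mult_1)

lemma rotate2_rotate2 [simp]: "rotate2 \<alpha> (rotate2 \<beta> y) = rotate2 (\<alpha> + \<beta>) y"
  by (simp add: rotate2_def cis_mult mult.assoc[symmetric] mult.commute)

lemma rotate2_0 [simp]: "rotate2 0 y = y"
  by (simp add: rotate2_def)

lemma complex_of_vec_diff: "complex_of_vec (x - y) = complex_of_vec x - complex_of_vec y"
  by (simp add: complex_of_vec_def complex_eq_iff)

lemma orthogonal_transformation_rotate2: "orthogonal_transformation (rotate2 \<theta>)"
  unfolding orthogonal_transformation_isometry
proof
  show "rotate2 \<theta> 0 = 0"
    by (simp add: rotate2_def complex_of_vec_def vec_of_complex_def vec_eq_iff forall_2)
  have "rotate2 \<theta> x - rotate2 \<theta> y = rotate2 \<theta> (x - y)" for x y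
    by (metis vec_of_complex_of_vec complex_of_vec_diff complex_of_vec_rotate2 right_diff_distrib)
  then show "\<forall>x y. dist (rotate2 \<theta> x) (rotate2 \<theta> y) = dist x y"
    by (simp add: dist_norm)
qed

lemma continuous_on_rotate2: "continuous_on UNIV (\<lambda>(y, \<theta>). rotate2 \<theta> y)"
  unfolding rotate2_def case_prod_unfold by (intro continuous_intros)

lemma measurable_rotate2 [measurable]: "rotate2 \<theta> \<in> borel_measurable borel"
  unfolding rotate2_def by (intro borel_measurable_continuous_onI continuous_intros)

lemma distr_lborel_rotate2: "distr lborel borel (rotate2 \<theta>) = lborel"
proof (rule lborel_eqI[symmetric])
  fix l u :: "real^2"
  assume lu: "\<And>b. b \<in> Basis \<Longrightarrow> l \<bullet> b \<le> u \<bullet> b"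
  have box: "box l u \<in> lmeasurable" by simp
  have vimage: "rotate2 \<theta> -` box l u = rotate2 (-\<theta>) ` box l u"
  proof safe
    fix x assume "rotate2 \<theta> x \<in> box l u"
    then show "x \<in> rotate2 (-\<theta>) ` box l u"
      by (intro image_eqI[of _ _ "rotate2 \<theta> x"]) simp_all
  qed simp
  have "rotate2 \<theta> -` box l u \<in> sets borel"
    using measurable_sets[OF measurable_rotate2, of "box l u"] by simp
  then have "emeasure (distr lborel borel (rotate2 \<theta>)) (box l u) = emeasure lebesgue (rotate2 \<theta> -` box l u)"
    by (subst emeasure_distr) auto
  also have "\<dots> = emeasure lebesgue (rotate2 (-\<theta>) ` box l u)"
    by (simp only: vimage)
  also have "\<dots> = measure lebesgue (box l u)"
    using measure_orthogonal_image[OF orthogonal_transformation_rotate2 box]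
      measurable_orthogonal_image[OF orthogonal_transformation_rotate2 box]
    by (simp add: emeasure_eq_measure2)
  finally show "emeasure (distr lborel borel (rotate2 \<theta>)) (box l u) = (\<Prod>b\<in>Basis. (u - l) \<bullet> b)"
    using box lu by (simp add: emeasure_eq_measure2[symmetric] emeasure_lborel_box)
qed simp

lemma nn_integral_rotate2:
  assumes [measurable]: "h \<in> borel_measurable borel"
  shows "(\<integral>\<^sup>+ y. h (rotate2 \<theta> y) \<partial>lborel) = (\<integral>\<^sup>+ y. h y \<partial>lborel)"
  by (subst (2) distr_lborel_rotate2[symmetric, of \<theta>]) (simp add: nn_integral_distr)

lemma nn_integral_rotation_average:
  fixes h :: "real^2 \<Rightarrow> ennreal"
  assumes [measurable]: "h \<in> borel_measurable borel"
  shows "ennreal (2 * pi) * (\<integral>\<^sup>+ y. h y \<partial>lborel)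
           = (\<integral>\<^sup>+ y. (\<integral>\<^sup>+ \<theta>\<in>{-pi..pi}. h (rotate2 \<theta> y) \<partial>lborel) \<partial>lborel)"
proof -
  have "(\<lambda>(y, \<theta>). rotate2 \<theta> y) \<in> borel_measurable (borel :: ((real^2) \<times> real) measure)"
    using continuous_on_rotate2 by (rule borel_measurable_continuous_onI)
  then have [measurable]: "(\<lambda>(y, \<theta>). h (rotate2 \<theta> y)) \<in> borel_measurable (lborel \<Otimes>\<^sub>M lborel)"
    by (simp add: lborel_prod measurable_compose[OF _ assms] case_prod_unfold)
  have "(\<integral>\<^sup>+ y. (\<integral>\<^sup>+ \<theta>\<in>{-pi..pi}. h (rotate2 \<theta> y) \<partial>lborel) \<partial>lborel)
      = (\<integral>\<^sup>+ \<theta>. (\<integral>\<^sup>+ y. h (rotate2 \<theta> y) * indicator {-pi..pi} \<theta> \<partial>lborel) \<partial>lborel)"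
    by (rule lborel_pair.Fubini') (simp add: case_prod_unfold)
  also have "\<dots> = (\<integral>\<^sup>+ \<theta>. (\<integral>\<^sup>+ y. h y \<partial>lborel) * indicator {-pi..pi} \<theta> \<partial>lborel)"
    by (simp add: nn_integral_multc nn_integral_rotate2)
  also have "\<dots> = (\<integral>\<^sup>+ y. h y \<partial>lborel) * ennreal (2 * pi)"
    by (simp add: nn_integral_cmult_indicator mult.commute)
  finally show ?thesis
    by (simp add: mult.commute)
qed

lemma nn_integral_circle_power_series:
  fixes g :: "complex \<Rightarrow> complex" and a :: real
  assumes g: "g holomorphic_on ball 0 R" and z: "cmod z < R" and a: "0 \<le> a"
  shows "(\<integral>\<^sup>+ \<theta>\<in>{-pi..pi}. ennreal (a * (cmod (g (cis \<theta> * z)))\<^sup>2) \<partial>lborel)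
    = ennreal (2 * pi) * (\<Sum>n. ennreal ((cmod (taylor_coeff g n))\<^sup>2) * ennreal (a * cmod z ^ (2 * n)))"
proof -
  define t where "t n = 2 * pi * ((cmod (taylor_coeff g n))\<^sup>2 * (a * cmod z ^ (2 * n)))" for n
  have "(\<lambda>n. a * (2 * pi * (cmod (taylor_coeff g n))\<^sup>2 * cmod z ^ (2 * n)))
      sums (a * (\<integral>\<theta>\<in>{-pi..pi}. (cmod (g (cis \<theta> * z)))\<^sup>2 \<partial>lborel))"
    by (rule sums_mult[OF parseval_power_series_circle[OF g z]])
  moreover have "t = (\<lambda>n. a * (2 * pi * (cmod (taylor_coeff g n))\<^sup>2 * cmod z ^ (2 * n)))"
    by (simp add: fun_eq_iff t_def mult_ac)
  ultimately have sums: "t sums (\<integral>\<theta>\<in>{-pi..pi}. a * (cmod (g (cis \<theta> * z)))\<^sup>2 \<partial>lborel)"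
    by simp
  have "continuous_on {-pi..pi} (\<lambda>\<theta>. a * (cmod (g (cis \<theta> * z)))\<^sup>2)"
    by (intro continuous_intros continuous_on_compose2[OF holomorphic_on_imp_continuous_on[OF g]])
      (auto simp: norm_mult z)
  then have "integrable lborel (\<lambda>\<theta>. indicator {-pi..pi} \<theta> *\<^sub>R (a * (cmod (g (cis \<theta> * z)))\<^sup>2))"
    by (rule borel_integrable_compact[OF compact_Icc])
  then have "(\<integral>\<^sup>+ \<theta>. ennreal (indicator {-pi..pi} \<theta> *\<^sub>R (a * (cmod (g (cis \<theta> * z)))\<^sup>2)) \<partial>lborel)
      = ennreal (\<integral>\<theta>\<in>{-pi..pi}. a * (cmod (g (cis \<theta> * z)))\<^sup>2 \<partial>lborel)"
    unfolding set_lebesgue_integral_def using a by (intro nn_integral_eq_integral) simp_all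
  moreover have "(\<integral>\<^sup>+ \<theta>\<in>{-pi..pi}. ennreal (a * (cmod (g (cis \<theta> * z)))\<^sup>2) \<partial>lborel)
      = (\<integral>\<^sup>+ \<theta>. ennreal (indicator {-pi..pi} \<theta> *\<^sub>R (a * (cmod (g (cis \<theta> * z)))\<^sup>2)) \<partial>lborel)"
    by (intro nn_integral_cong) (simp add: indicator_def)
  ultimately have "(\<integral>\<^sup>+ \<theta>\<in>{-pi..pi}. ennreal (a * (cmod (g (cis \<theta> * z)))\<^sup>2) \<partial>lborel) = ennreal (suminf t)"
    using sums_unique[OF sums] by simp
  also have "\<dots> = (\<Sum>n. ennreal (t n))"
    using a by (intro suminf_ennreal2[symmetric] sums_summable[OF sums]) (simp add: t_def)
  also have "\<dots> = (\<Sum>n. ennreal (2 * pi) * (ennreal ((cmod (taylor_coeff g n))\<^sup>2) * ennreal (a * cmod z ^ (2 * n))))"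
    using a by (intro suminf_cong) (simp add: t_def ennreal_mult)
  finally show ?thesis
    by simp
qed

lemma sets_borel_ball [measurable]: "ball x r \<in> sets borel"
  by (simp add: borel_open)

lemma nn_integral_unit_disc_power_series:
  fixes g :: "complex \<Rightarrow> complex" and w :: "real \<Rightarrow> real"
  assumes g: "g holomorphic_on ball 0 1"
    and w [measurable]: "w \<in> borel_measurable borel" and w_nonneg: "\<And>r. 0 \<le> w r"
  shows "(\<integral>\<^sup>+ y\<in>ball 0 1. ennreal (w (norm y) * (cmod (g (complex_of_vec y)))\<^sup>2) \<partial>lborel)
    = (\<Sum>n. ennreal ((cmod (taylor_coeff g n))\<^sup>2) * (\<integral>\<^sup>+ (y::real^2)\<in>ball 0 1. ennreal (w (norm y) * norm y ^ (2 * n)) \<partial>lborel))"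
    (is "?lhs = ?rhs")
proof -
  define h where "h y = ennreal (w (norm y) * (cmod (g (complex_of_vec y)))\<^sup>2) * indicator (ball 0 1) y" for y
  define c where "c n = ennreal ((cmod (taylor_coeff g n))\<^sup>2)" for n
  have "(\<lambda>y. indicator (ball 0 1) y *\<^sub>R (cmod (g (complex_of_vec y)))\<^sup>2) \<in> borel_measurable borel"
    by (intro borel_measurable_continuous_on_indicator continuous_intros
        continuous_on_compose2[OF holomorphic_on_imp_continuous_on[OF g]]) auto
  then have "(\<lambda>y. ennreal (w (norm y) * (indicator (ball 0 1) y *\<^sub>R (cmod (g (complex_of_vec y)))\<^sup>2)))
      \<in> borel_measurable borel"
    by measurable
  moreover have "h = (\<lambda>y. ennreal (w (norm y) * (indicator (ball 0 1) y *\<^sub>R (cmod (g (complex_of_vec y)))\<^sup>2)))"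
    by (auto simp: fun_eq_iff h_def indicator_def)
  ultimately have [measurable]: "h \<in> borel_measurable borel"
    by simp
  have circle: "(\<integral>\<^sup>+ \<theta>\<in>{-pi..pi}. h (rotate2 \<theta> y) \<partial>lborel)
      = ennreal (2 * pi) * (\<Sum>n. c n * (ennreal (w (norm y) * norm y ^ (2 * n)) * indicator (ball 0 1) y))" for y
  proof (cases "norm y < 1")
    case True
    then have "(\<integral>\<^sup>+ \<theta>\<in>{-pi..pi}. h (rotate2 \<theta> y) \<partial>lborel)
        = (\<integral>\<^sup>+ \<theta>\<in>{-pi..pi}. ennreal (w (norm y) * (cmod (g (cis \<theta> * complex_of_vec y)))\<^sup>2) \<partial>lborel)"
      by (simp add: h_def)
    also have "\<dots> = ennreal (2 * pi) * (\<Sum>n. c n * ennreal (w (norm y) * norm y ^ (2 * n)))"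
      using nn_integral_circle_power_series[OF g, of "complex_of_vec y" "w (norm y)"] True w_nonneg
      by (simp add: c_def)
    finally show ?thesis
      using True by simp
  qed (simp add: h_def)
  have "ennreal (2 * pi) * ?lhs = (\<integral>\<^sup>+ y. (\<integral>\<^sup>+ \<theta>\<in>{-pi..pi}. h (rotate2 \<theta> y) \<partial>lborel) \<partial>lborel)"
    unfolding h_def[symmetric] by (rule nn_integral_rotation_average) measurable
  also have "\<dots> = ennreal (2 * pi) * (\<Sum>n. \<integral>\<^sup>+ (y::real^2). c n * (ennreal (w (norm y) * norm y ^ (2 * n)) * indicator (ball 0 1) y) \<partial>lborel)"
    unfolding circle by (simp add: nn_integral_cmult nn_integral_suminf)
  also have "\<dots> = ennreal (2 * pi) * ?rhs"
    by (simp add: nn_integral_cmult c_def)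
  finally show ?thesis
    by (simp add: ennreal_mult_cancel_left)
qed

lemma has_integral_power_Icc:
  fixes a b :: real
  assumes "a \<le> b"
  shows "((\<lambda>r. r ^ n) has_integral (b ^ (n + 1) - a ^ (n + 1)) / (n + 1)) {a..b}"
proof -
  have "((\<lambda>r. r ^ n) has_integral (b ^ (n + 1) / (n + 1) - a ^ (n + 1) / (n + 1))) {a..b}"
  proof (rule fundamental_theorem_of_calculus[OF assms])
    fix x :: real
    have "((\<lambda>r. r ^ (n + 1) / real (n + 1)) has_real_derivative real (n + 1) * x ^ n / real (n + 1)) (at x)"
      by (intro derivative_eq_intros) auto
    then show "((\<lambda>r. r ^ (n + 1) / real (n + 1)) has_vector_derivative x ^ n) (at x within {a..b})"
      by (simp add: has_real_derivative_iff_has_vector_derivative[symmetric] has_field_derivative_at_within)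
  qed
  then show ?thesis
    by (simp add: diff_divide_distrib)
qed

lemma emeasure_unit_disc_norm_greater:
  assumes "x < 1"
  shows "emeasure lborel (ball (0::real^2) 1 \<inter> {y. x < norm y}) = ennreal (pi * (1 - (max 0 x)\<^sup>2))"
proof (cases "x < 0")
  case True
  then have "ball (0::real^2) 1 \<inter> {y. x < norm y} = ball 0 1"
    by (auto intro: less_le_trans[OF _ norm_ge_zero])
  then show ?thesis
    using True by (simp add: emeasure_ball unit_ball_vol_2)
next
  case False
  then have "ball (0::real^2) 1 \<inter> {y. x < norm y} = ball 0 1 - cball 0 x"
    by auto
  moreover have "emeasure lborel (ball (0::real^2) 1 - cball 0 x)
      = emeasure lborel (ball (0::real^2) 1) - emeasure lborel (cball (0::real^2) x)"
    using assms False
    by (intro emeasure_Diff) (auto simp: borel_open borel_closed emeasure_cball unit_ball_vol_2)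
  ultimately show ?thesis
    using assms False
    by (simp add: emeasure_ball emeasure_cball unit_ball_vol_2 ennreal_minus algebra_simps power2_eq_square)
qed

definition radial_density :: "real measure" where
  "radial_density = density lborel (\<lambda>r. ennreal (2 * pi * r) * indicator {0<..<1} r)"

lemma emeasure_radial_density_greater:
  assumes "x < 1"
  shows "emeasure radial_density {x<..} = ennreal (pi * (1 - (max 0 x)\<^sup>2))"
proof -
  let ?a = "max 0 x"
  have "emeasure radial_density {x<..} = (\<integral>\<^sup>+ r. ennreal (2 * pi * r) * indicator {?a<..<1} r \<partial>lborel)"
    unfolding radial_density_def
    by (subst emeasure_density) (auto intro!: nn_integral_cong simp: indicator_def)
  also have "\<dots> = ennreal (pi * (1 - ?a\<^sup>2))"
  proof (rule nn_integral_has_integral_lebesgue')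
    have "((\<lambda>r. 2 * pi * r ^ 1) has_integral 2 * pi * ((1 ^ 2 - ?a ^ 2) / 2)) {?a..1}"
      using assms has_integral_power_Icc[of ?a 1 1]
      by (intro has_integral_mult_right) (simp add: numeral_2_eq_2)
    then show "((\<lambda>r. 2 * pi * r) has_integral pi * (1 - ?a\<^sup>2)) {?a<..<1}"
      by (simp add: has_integral_Icc_iff_Ioo[symmetric])
  qed auto
  finally show ?thesis .
qed

lemma distr_norm_unit_disc:
  "distr (density lborel (indicator (ball (0::real^2) 1))) borel norm = radial_density"
proof (rule measure_eqI_lessThan)
  let ?M = "distr (density lborel (indicator (ball (0::real^2) 1))) borel norm"
  have tail: "emeasure ?M {x<..} = emeasure lborel (ball (0::real^2) 1 \<inter> {y. x < norm y})" for x
  proof -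
    have [measurable]: "{y::real^2. x < norm y} \<in> sets borel"
      by measurable
    have "emeasure ?M {x<..} = emeasure (density lborel (indicator (ball (0::real^2) 1))) {y. x < norm y}"
      by (subst emeasure_distr) (auto simp: vimage_def)
    also have "\<dots> = (\<integral>\<^sup>+ y. indicator (ball (0::real^2) 1) y * indicator {y. x < norm y} y \<partial>lborel)"
      by (subst emeasure_density) (auto simp: borel_open)
    also have "\<dots> = (\<integral>\<^sup>+ y. indicator (ball (0::real^2) 1 \<inter> {y. x < norm y}) y \<partial>lborel)"
      by (simp add: indicator_inter_arith)
    also have "\<dots> = emeasure lborel (ball (0::real^2) 1 \<inter> {y. x < norm y})"
      by (intro nn_integral_indicator) (simp add: borel_open)
    finally show ?thesis .
  qed
  show "emeasure ?M {x<..} = emeasure radial_density {x<..}" for x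
  proof (cases "x < 1")
    case True
    then show ?thesis
      by (simp add: tail emeasure_unit_disc_norm_greater emeasure_radial_density_greater)
  next
    case False
    then have "ball (0::real^2) 1 \<inter> {y. x < norm y} = {}"
      by auto
    moreover have "emeasure radial_density {x<..} = 0"
    proof -
      have "(\<lambda>r. ennreal (2 * pi * r) * indicator {0<..<1} r * indicator {x<..} r) = (\<lambda>_. 0)"
        using False by (auto simp: indicator_def fun_eq_iff)
      then show ?thesis
        by (simp add: radial_density_def emeasure_density)
    qed
    ultimately show ?thesis
      by (simp add: tail)
  qed
  show "emeasure ?M {x<..} < \<infinity>" for x
    using emeasure_mono[of "ball (0::real^2) 1 \<inter> {y. x < norm y}" "ball 0 1" lborel]
    by (simp add: tail emeasure_ball unit_ball_vol_2 borel_open top.not_eq_extremum le_less_trans)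
qed (simp_all add: radial_density_def)

lemma nn_integral_unit_disc_radial:
  fixes \<phi> :: "real \<Rightarrow> ennreal"
  assumes [measurable]: "\<phi> \<in> borel_measurable borel"
  shows "(\<integral>\<^sup>+ (y::real^2)\<in>ball 0 1. \<phi> (norm y) \<partial>lborel)
           = (\<integral>\<^sup>+ r\<in>{0<..<1}. ennreal (2 * pi * r) * \<phi> r \<partial>lborel)"
proof -
  have "(\<integral>\<^sup>+ (y::real^2)\<in>ball 0 1. \<phi> (norm y) \<partial>lborel)
      = (\<integral>\<^sup>+ r. \<phi> r \<partial>distr (density lborel (indicator (ball (0::real^2) 1))) borel norm)"
    by (simp add: nn_integral_distr nn_integral_density mult.commute)
  also have "\<dots> = (\<integral>\<^sup>+ r. \<phi> r \<partial>radial_density)"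
    by (simp only: distr_norm_unit_disc)
  also have "\<dots> = (\<integral>\<^sup>+ r\<in>{0<..<1}. ennreal (2 * pi * r) * \<phi> r \<partial>lborel)"
    by (simp add: radial_density_def nn_integral_density mult_ac)
  finally show ?thesis .
qed

lemma nn_integral_unit_disc_power:
  "(\<integral>\<^sup>+ (y::real^2)\<in>ball 0 1. ennreal (norm y ^ k) \<partial>lborel) = ennreal (2 * pi / (real k + 2))"
proof -
  have "((\<lambda>r. 2 * pi * r ^ (k + 1)) has_integral 2 * pi * (1 / (real k + 2))) {0..1}"
    using has_integral_power_Icc[of 0 1 "k + 1"]
    by (intro has_integral_mult_right) (simp add: add_ac power_0_left)
  then have "((\<lambda>r. 2 * pi * r * r ^ k) has_integral 2 * pi / (real k + 2)) {0<..<1}"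
    by (simp add: has_integral_Icc_iff_Ioo[symmetric] mult.assoc)
  then have "(\<integral>\<^sup>+ r\<in>{0<..<1}. ennreal (2 * pi * r * r ^ k) \<partial>lborel) = ennreal (2 * pi / (real k + 2))"
    by (rule nn_integral_has_integral_lebesgue'[rotated]) simp
  moreover have "(\<integral>\<^sup>+ r\<in>{0<..<1}. ennreal (2 * pi * r) * ennreal (r ^ k) \<partial>lborel)
      = (\<integral>\<^sup>+ r\<in>{0<..<1}. ennreal (2 * pi * r * r ^ k) \<partial>lborel)"
    by (intro nn_integral_cong) (auto simp: ennreal_mult split: split_indicator)
  moreover have "(\<integral>\<^sup>+ (y::real^2)\<in>ball 0 1. ennreal (norm y ^ k) \<partial>lborel)
      = (\<integral>\<^sup>+ r\<in>{0<..<1}. ennreal (2 * pi * r) * ennreal (r ^ k) \<partial>lborel)"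
    by (rule nn_integral_unit_disc_radial[where \<phi> = "\<lambda>r. ennreal (r ^ k)"]) measurable
  ultimately show ?thesis
    by simp
qed

lemma inverse_second_difference:
  fixes x :: real
  assumes "0 < x"
  shows "1 / x - 2 * (1 / (x + 1)) + 1 / (x + 2) = 2 / (x * (x + 1) * (x + 2))"
  using assms by (simp add: divide_simps) (simp add: algebra_simps)

lemma nn_integral_unit_disc_weighted_power:
  "(\<integral>\<^sup>+ (y::real^2)\<in>ball 0 1. ennreal ((1 - norm y)\<^sup>2 * norm y ^ k) \<partial>lborel)
     = ennreal (4 * pi / ((real k + 2) * (real k + 3) * (real k + 4)))"
proof -
  have "((\<lambda>r. 2 * pi * (r ^ (k + 1) - 2 * r ^ (k + 2) + r ^ (k + 3))) has_integral
      2 * pi * (1 / (real k + 2) - 2 * (1 / (real k + 3)) + 1 / (real k + 4))) {0..1}"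
    using has_integral_power_Icc[of 0 1 "k + 1"] has_integral_power_Icc[of 0 1 "k + 2"]
      has_integral_power_Icc[of 0 1 "k + 3"]
    by (intro has_integral_mult_right has_integral_add has_integral_diff) (simp_all add: add_ac power_0_left)
  moreover have "1 / (real k + 2) - 2 * (1 / (real k + 3)) + 1 / (real k + 4)
      = 2 / ((real k + 2) * (real k + 3) * (real k + 4))"
  proof -
    have "real k + 2 + 1 = real k + 3" "real k + 2 + 2 = real k + 4"
      by simp_all
    then show ?thesis
      using inverse_second_difference[of "real k + 2"] by (simp only:)
  qed
  moreover have "2 * pi * (r ^ (k + 1) - 2 * r ^ (k + 2) + r ^ (k + 3)) = 2 * pi * r * ((1 - r)\<^sup>2 * r ^ k)"
    for r :: real
    by (simp add: power2_eq_square power3_eq_cube power_add algebra_simps)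
  ultimately have "((\<lambda>r. 2 * pi * r * ((1 - r)\<^sup>2 * r ^ k)) has_integral
      4 * pi / ((real k + 2) * (real k + 3) * (real k + 4))) {0<..<1}"
    by (simp add: has_integral_Icc_iff_Ioo[symmetric] mult.assoc)
  then have "(\<integral>\<^sup>+ r\<in>{0<..<1}. ennreal (2 * pi * r * ((1 - r)\<^sup>2 * r ^ k)) \<partial>lborel)
      = ennreal (4 * pi / ((real k + 2) * (real k + 3) * (real k + 4)))"
    by (rule nn_integral_has_integral_lebesgue'[rotated]) simp
  moreover have "(\<integral>\<^sup>+ r\<in>{0<..<1}. ennreal (2 * pi * r) * ennreal ((1 - r)\<^sup>2 * r ^ k) \<partial>lborel)
      = (\<integral>\<^sup>+ r\<in>{0<..<1}. ennreal (2 * pi * r * ((1 - r)\<^sup>2 * r ^ k)) \<partial>lborel)"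
    by (intro nn_integral_cong) (auto simp: ennreal_mult split: split_indicator)
  moreover have "(\<integral>\<^sup>+ (y::real^2)\<in>ball 0 1. ennreal ((1 - norm y)\<^sup>2 * norm y ^ k) \<partial>lborel)
      = (\<integral>\<^sup>+ r\<in>{0<..<1}. ennreal (2 * pi * r) * ennreal ((1 - r)\<^sup>2 * r ^ k) \<partial>lborel)"
    by (rule nn_integral_unit_disc_radial[where \<phi> = "\<lambda>r. ennreal ((1 - r)\<^sup>2 * r ^ k)"]) measurable
  ultimately show ?thesis
    by simp
qed

section \<open>The energy series\<close>

lemma ennreal_suminf_Suc_le: "(\<Sum>n. f (Suc n)) \<le> (\<Sum>n. f n :: ennreal)"
proof -
  have "f sums ((\<Sum>n. f (Suc n)) + f 0)"
    by (rule sums_Suc) (simp add: summable_sums)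
  then show ?thesis
    by (simp add: sums_iff)
qed

lemma dirichlet_energy_eq_series:
  assumes u: "harmonic_on u (ball 0 1)"
  shows "(\<integral>\<^sup>+ y\<in>ball 0 1. ennreal (grad_sq u y) \<partial>lborel)
    = (\<Sum>n. ennreal ((cmod (taylor_coeff (holo_grad u) n))\<^sup>2) * ennreal (2 * pi / (real (2 * n) + 2)))"
proof -
  have "holo_grad u holomorphic_on ball 0 1"
    using holomorphic_on_holo_grad[OF u open_ball] by simp
  then have "(\<integral>\<^sup>+ y\<in>ball 0 1. ennreal (1 * (cmod (holo_grad u (complex_of_vec y)))\<^sup>2) \<partial>lborel)
    = (\<Sum>n. ennreal ((cmod (taylor_coeff (holo_grad u) n))\<^sup>2) *
        (\<integral>\<^sup>+ (y::real^2)\<in>ball 0 1. ennreal (1 * norm y ^ (2 * n)) \<partial>lborel))"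
    by (rule nn_integral_unit_disc_power_series) simp_all
  then show ?thesis
    by (simp add: grad_sq_eq_norm_holo_grad nn_integral_unit_disc_power)
qed

lemma weighted_hessian_energy_eq_series:
  assumes u: "harmonic_on u (ball 0 1)"
  shows "(\<integral>\<^sup>+ y\<in>ball 0 1. ennreal ((1 - norm y)\<^sup>2 * hess_sq u y) \<partial>lborel)
    = (\<Sum>n. ennreal ((cmod (taylor_coeff (deriv (holo_grad u)) n))\<^sup>2) *
        ennreal (8 * pi / ((real (2 * n) + 2) * (real (2 * n) + 3) * (real (2 * n) + 4))))"
proof -
  have "holo_grad u holomorphic_on ball 0 1"
    using holomorphic_on_holo_grad[OF u open_ball] by simp
  then have "deriv (holo_grad u) holomorphic_on ball 0 1"
    by (rule holomorphic_deriv) simp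
  then have "(\<integral>\<^sup>+ y\<in>ball 0 1. ennreal (2 * (1 - norm y)\<^sup>2 * (cmod (deriv (holo_grad u) (complex_of_vec y)))\<^sup>2) \<partial>lborel)
    = (\<Sum>n. ennreal ((cmod (taylor_coeff (deriv (holo_grad u)) n))\<^sup>2) *
        (\<integral>\<^sup>+ (y::real^2)\<in>ball 0 1. ennreal (2 * (1 - norm y)\<^sup>2 * norm y ^ (2 * n)) \<partial>lborel))"
    by (rule nn_integral_unit_disc_power_series[where w = "\<lambda>r. 2 * (1 - r)\<^sup>2"]) simp_all
  moreover have "(\<integral>\<^sup>+ (y::real^2)\<in>ball 0 1. ennreal (2 * (1 - norm y)\<^sup>2 * norm y ^ k) \<partial>lborel)
      = ennreal (8 * pi / ((real k + 2) * (real k + 3) * (real k + 4)))" for k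
  proof -
    have "(\<integral>\<^sup>+ (y::real^2)\<in>ball 0 1. ennreal (2 * (1 - norm y)\<^sup>2 * norm y ^ k) \<partial>lborel)
        = (\<integral>\<^sup>+ (y::real^2). 2 * (ennreal ((1 - norm y)\<^sup>2 * norm y ^ k) * indicator (ball 0 1) y) \<partial>lborel)"
      by (intro nn_integral_cong) (simp add: ennreal_mult mult.assoc)
    also have "\<dots> = 2 * ennreal (4 * pi / ((real k + 2) * (real k + 3) * (real k + 4)))"
      by (subst nn_integral_cmult) (simp_all add: nn_integral_unit_disc_weighted_power)
    also have "\<dots> = ennreal (8 * pi / ((real k + 2) * (real k + 3) * (real k + 4)))"
      by (subst ennreal_numeral[symmetric], subst ennreal_mult[symmetric]) auto
    finally show ?thesis .
  qed
  moreover have "(\<integral>\<^sup>+ y\<in>ball 0 1. ennreal ((1 - norm y)\<^sup>2 * hess_sq u y) \<partial>lborel)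
      = (\<integral>\<^sup>+ y\<in>ball 0 1. ennreal (2 * (1 - norm y)\<^sup>2 * (cmod (deriv (holo_grad u) (complex_of_vec y)))\<^sup>2) \<partial>lborel)"
    by (intro set_nn_integral_cong) (simp_all add: hess_sq_eq_norm_deriv_holo_grad[OF u open_ball])
  ultimately show ?thesis
    by simp
qed

lemma hessian_weight_le:
  fixes x :: real
  assumes "0 < x"
  shows "(x / 2)\<^sup>2 * (8 * pi / (x * (x + 1) * (x + 2))) \<le> 2 * pi / (x + 2)"
  using assms by (simp add: divide_simps power2_eq_square)

lemma hessian_term_le:
  fixes a :: complex
  shows "ennreal ((cmod (of_nat (Suc n) * a))\<^sup>2) *
           ennreal (8 * pi / ((real (2 * n) + 2) * (real (2 * n) + 3) * (real (2 * n) + 4)))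
         \<le> ennreal ((cmod a)\<^sup>2) * ennreal (2 * pi / (real (2 * Suc n) + 2))"
proof -
  define x where "x = real (2 * n) + 2"
  have x: "0 < x" "real (2 * n) + 3 = x + 1" "real (2 * n) + 4 = x + 2"
    "real (2 * Suc n) + 2 = x + 2" "real (Suc n) = x / 2"
    by (simp_all add: x_def)
  have "ennreal ((cmod (of_nat (Suc n) * a))\<^sup>2) * ennreal (8 * pi / (x * (x + 1) * (x + 2)))
      = ennreal ((cmod a)\<^sup>2 * ((x / 2)\<^sup>2 * (8 * pi / (x * (x + 1) * (x + 2)))))"
  proof -
    have norm_eq: "cmod (of_nat (Suc n) * a) = x / 2 * cmod a"
      by (simp only: norm_mult norm_of_nat x(5))
    show ?thesis
      unfolding norm_eq using x(1) by (simp add: ennreal_mult[symmetric] power_mult_distrib power_divide mult_ac)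
  qed
  also have "\<dots> \<le> ennreal ((cmod a)\<^sup>2 * (2 * pi / (x + 2)))"
    using hessian_weight_le[OF x(1)] by (intro ennreal_leI mult_left_mono) simp_all
  also have "\<dots> = ennreal ((cmod a)\<^sup>2) * ennreal (2 * pi / (x + 2))"
    using x(1) by (intro ennreal_mult) simp_all
  finally show ?thesis
    unfolding x_def[symmetric] x(2-4) .
qed

theorem lemmaB2:
  fixes u :: "real^2 \<Rightarrow> real"
  assumes "harmonic_on u (ball 0 1)"
    and "(\<integral>\<^sup>+ y \<in> ball 0 1. ennreal (grad_sq u y) \<partial>lborel) < \<infinity>"
  shows "(\<integral>\<^sup>+ y \<in> ball 0 1. ennreal ((1 - norm y)^2 * hess_sq u y) \<partial>lborel)
           \<le> (\<integral>\<^sup>+ y \<in> ball 0 1. ennreal (grad_sq u y) \<partial>lborel)"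
proof -
  define c where "c = taylor_coeff (holo_grad u)"
  define E where "E n = ennreal ((cmod (c n))\<^sup>2) * ennreal (2 * pi / (real (2 * n) + 2))" for n
  have "(\<integral>\<^sup>+ y \<in> ball 0 1. ennreal ((1 - norm y)^2 * hess_sq u y) \<partial>lborel)
      = (\<Sum>n. ennreal ((cmod (of_nat (Suc n) * c (Suc n)))\<^sup>2) *
          ennreal (8 * pi / ((real (2 * n) + 2) * (real (2 * n) + 3) * (real (2 * n) + 4))))"
    by (simp add: weighted_hessian_energy_eq_series[OF assms(1)] taylor_coeff_deriv c_def)
  also have "\<dots> \<le> (\<Sum>n. E (Suc n))"
    unfolding E_def by (intro suminf_le hessian_term_le summableI)
  also have "\<dots> \<le> (\<Sum>n. E n)"
    by (rule ennreal_suminf_Suc_le)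
  also have "\<dots> = (\<integral>\<^sup>+ y \<in> ball 0 1. ennreal (grad_sq u y) \<partial>lborel)"
    by (simp add: dirichlet_energy_eq_series[OF assms(1)] E_def c_def)
  finally show ?thesis .
qed

end
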